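(* There exists a three-point set $X\subset \mathbb{S}^1$ that is not a spherical suborbit of any finite group action: there is no finite group $G$, no $n\ge 2$ and no orthogonal linear action of $G$ on $\mathbb{R}^n$ (with $\mathbb{R}^2\subset\mathbb{R}^n$ included as the first two coordinates, so $\mathbb{S}^1\subset\mathbb{S}^{n-1}$) such that $X$ is contained in a single $G$-orbit.
   Context: $\mathbb{S}^{m-1}$ denotes the unit sphere in $\mathbb{R}^m$. A set $X\subset\mathbb{S}^{k-1}$ is a spherical suborbit of a group $G$ if $X$ is contained in an orbit of $G$ with respect to some orthogonal action of $G$ on a sphere $\mathbb{S}^{n-1}$ ($n\ge k$) containing $\mathbb{S}^{k-1}$ isometrically in the standard way. *)

theory Defs
  imports Complex_Main "HOL-Algebra.Group"
begin

text \<open>Vectors of R^n are modelled as functions nat \<Rightarrow> real vanishing at all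
  indices \<ge> n; linear maps of R^n as matrices nat \<Rightarrow> nat \<Rightarrow> real
  (only entries with indices < n matter).\<close>

definition in_Rn :: "nat \<Rightarrow> (nat \<Rightarrow> real) \<Rightarrow> bool" where
  "in_Rn n x \<longleftrightarrow> (\<forall>i\<ge>n. x i = 0)"

definition mat_apply :: "nat \<Rightarrow> (nat \<Rightarrow> nat \<Rightarrow> real) \<Rightarrow> (nat \<Rightarrow> real) \<Rightarrow> (nat \<Rightarrow> real)" where
  "mat_apply n M x = (\<lambda>i. if i < n then (\<Sum>j<n. M i j * x j) else 0)"

definition orthogonal_mat :: "nat \<Rightarrow> (nat \<Rightarrow> nat \<Rightarrow> real) \<Rightarrow> bool" where
  "orthogonal_mat n M \<longleftrightarrow>
     (\<forall>i<n. \<forall>j<n. (\<Sum>k<n. M k i * M k j) = (if i = j then 1 else 0))"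

definition orthogonal_action :: "('g, 'b) monoid_scheme \<Rightarrow> nat \<Rightarrow> ('g \<Rightarrow> nat \<Rightarrow> nat \<Rightarrow> real) \<Rightarrow> bool" where
  "orthogonal_action G n \<rho> \<longleftrightarrow>
     (\<forall>g\<in>carrier G. orthogonal_mat n (\<rho> g)) \<and>
     (\<forall>i<n. \<forall>j<n. \<rho> \<one>\<^bsub>G\<^esub> i j = (if i = j then 1 else 0)) \<and>
     (\<forall>g\<in>carrier G. \<forall>h\<in>carrier G. \<forall>i<n. \<forall>j<n.
        \<rho> (g \<otimes>\<^bsub>G\<^esub> h) i j = (\<Sum>k<n. \<rho> g i k * \<rho> h k j))"

definition circle :: "(real \<times> real) set" where
  "circle = {(a, b). a\<^sup>2 + b\<^sup>2 = 1}"

definition embed2 :: "real \<times> real \<Rightarrow> nat \<Rightarrow> real" where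
  "embed2 p = (\<lambda>i. if i = 0 then fst p else if i = 1 then snd p else 0)"

definition in_single_orbit :: "('g, 'b) monoid_scheme \<Rightarrow> nat \<Rightarrow> ('g \<Rightarrow> nat \<Rightarrow> nat \<Rightarrow> real)
    \<Rightarrow> (real \<times> real) set \<Rightarrow> bool" where
  "in_single_orbit G n \<rho> X \<longleftrightarrow>
     (\<exists>y. in_Rn n y \<and> (\<forall>p\<in>X. \<exists>g\<in>carrier G. embed2 p = mat_apply n (\<rho> g) y))"

end

theory Submission
  imports Defs "Jordan_Normal_Form.Determinant" "HOL-Library.Z2"
begin

text \<open>Take \<open>X = {x\<^sub>1, x\<^sub>2, x\<^sub>3} = {(1/4, r), (1, 0), (1/4, -r)}\<close> with \<open>r = \<surd>15 / 4\<close>, so that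
  \<open>x\<^sub>2 = 2 x\<^sub>1 + 2 x\<^sub>3\<close>. If \<open>x\<^sub>k = \<rho>(g\<^sub>k) y\<close> for a finite group \<open>G\<close>, then for each
  coordinate \<open>i\<close> the function \<open>F h = (\<rho>(h g\<^sub>2) y)\<^sub>i\<close> on \<open>G\<close> satisfies
  \<open>F h = 2 F(h g\<^sub>1 g\<^sub>2\<inverse>) + 2 F(h g\<^sub>3 g\<^sub>2\<inverse>)\<close>. This linear system for \<open>F \<in> \<real>\<^sup>G\<close> has an
  integer matrix congruent to the identity modulo 2, hence of odd determinant, so \<open>F = 0\<close>;
  at \<open>h = 1\<close> this gives \<open>x\<^sub>2 = 0\<close>, which is impossible on the circle.\<close>

lemma mult_mat_vec_eq_0_if_identity_mod_2:
  fixes B :: "int mat" and v :: "real vec"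
  assumes "map_mat (of_int :: int \<Rightarrow> bit) B = 1\<^sub>m N"
    and "v \<in> carrier_vec N" and "map_mat of_int B *\<^sub>v v = 0\<^sub>v N"
  shows "v = 0\<^sub>v N"
proof -
  have B: "map_mat real_of_int B \<in> carrier_mat N N"
    using assms(1) by (metis carrier_mat_triv index_map_mat(2,3) index_one_mat(2,3))
  have "of_int (det B) = det (map_mat (of_int :: int \<Rightarrow> bit) B)"
    by (rule of_int_hom.hom_det[symmetric])
  also have "\<dots> = 1" using assms(1) by simp
  finally have "det B \<noteq> 0" by auto
  then have "det (map_mat real_of_int B) \<noteq> 0"
    by (simp add: of_int_hom.hom_det)
  then show ?thesis
    using det_0_iff_vec_prod_zero_field[OF B] assms(2,3) by blast
qed

lemma of_int_bit_identity_mod_2: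
  "(of_int ((if P then 1 else 0) - (if Q then 2 else 0) - (if R then 2 else 0)) :: bit)
     = (if P then 1 else 0)"
  by (cases P; cases Q; cases R; simp)

lemma mat_nth_identity_mod_2:
  fixes c :: "'a \<Rightarrow> 'a \<Rightarrow> int"
  assumes "distinct L" and c: "\<And>h x. (of_int (c h x) :: bit) = (if x = h then 1 else 0)"
  shows "map_mat (of_int :: int \<Rightarrow> bit) (mat (length L) (length L) (\<lambda>(i, j). c (L ! i) (L ! j)))
    = 1\<^sub>m (length L)"
proof (rule eq_matI)
  fix i j assume "i < dim_row (1\<^sub>m (length L) :: bit mat)" "j < dim_col (1\<^sub>m (length L) :: bit mat)"
  then have ij: "i < length L" "j < length L" by auto
  then have "(L ! j = L ! i) = (j = i)"
    using \<open>distinct L\<close> by (simp add: nth_eq_iff_index_eq)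
  with ij c show "map_mat (of_int :: int \<Rightarrow> bit) (mat (length L) (length L) (\<lambda>(i, j). c (L ! i) (L ! j))) $$ (i, j)
      = 1\<^sub>m (length L) $$ (i, j)"
    by simp
qed simp_all

lemma sum_nth_distinct:
  assumes "distinct L"
  shows "(\<Sum>j<length L. f (L ! j)) = (\<Sum>x\<in>set L. f x)"
  using assms by (simp add: sum.distinct_set_conv_list sum_list_sum_nth atLeast0LessThan)

lemma vanishes_if_twice_sum_of_two_shifts:
  fixes F :: "'a \<Rightarrow> real"
  assumes "finite S" and s: "s ` S \<subseteq> S" and t: "t ` S \<subseteq> S"
    and rel: "\<And>h. h \<in> S \<Longrightarrow> F h = 2 * F (s h) + 2 * F (t h)"
  shows "\<forall>h\<in>S. F h = 0"
proof -
  obtain L where L: "distinct L" "set L = S"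
    using finite_distinct_list[OF \<open>finite S\<close>] by blast
  define N where "N = length L"
  define c :: "'a \<Rightarrow> 'a \<Rightarrow> int"
    where "c h x = (if x = h then 1 else 0) - (if x = s h then 2 else 0) - (if x = t h then 2 else 0)"
    for h x
  define B :: "int mat" where "B = mat N N (\<lambda>(i, j). c (L ! i) (L ! j))"
  define v where "v = vec N (\<lambda>j. F (L ! j))"
  have B: "map_mat real_of_int B \<in> carrier_mat N N" unfolding B_def by simp
  have c_mod_2: "(of_int (c h x) :: bit) = (if x = h then 1 else 0)" for h x
    unfolding c_def by (rule of_int_bit_identity_mod_2)
  have "map_mat (of_int :: int \<Rightarrow> bit) B = 1\<^sub>m N"
    unfolding B_def N_def using L(1) c_mod_2 by (rule mat_nth_identity_mod_2)
  moreover have "v \<in> carrier_vec N" unfolding v_def by simp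
  moreover have "map_mat real_of_int B *\<^sub>v v = 0\<^sub>v N"
  proof (rule eq_vecI)
    fix i assume "i < dim_vec (0\<^sub>v N :: real vec)"
    then have i: "i < N" by simp
    then have Li: "L ! i \<in> S" using L N_def by auto
    then have "s (L ! i) \<in> S" "t (L ! i) \<in> S" using s t by auto
    have "(map_mat real_of_int B *\<^sub>v v) $ i = (\<Sum>j<N. c (L ! i) (L ! j) * F (L ! j))"
      using i by (auto simp: B_def v_def mult_mat_vec_def scalar_prod_def atLeast0LessThan intro!: sum.cong)
    also have "\<dots> = (\<Sum>x\<in>S. c (L ! i) x * F x)"
      using sum_nth_distinct[OF L(1)] L(2) N_def by simp
    also have "\<dots> = F (L ! i) - 2 * F (s (L ! i)) - 2 * F (t (L ! i))"
      using Li \<open>s (L ! i) \<in> S\<close> \<open>t (L ! i) \<in> S\<close> \<open>finite S\<close>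
      by (simp add: c_def left_diff_distrib sum_subtractf if_distrib[of real_of_int]
          if_distrib[of "\<lambda>y. y * _"] cong: if_cong)
    also have "\<dots> = 0" using rel[OF Li] by simp
    finally show "(map_mat real_of_int B *\<^sub>v v) $ i = 0\<^sub>v N $ i" using i by simp
  qed (use B in auto)
  ultimately have "v = 0\<^sub>v N"
    by (rule mult_mat_vec_eq_0_if_identity_mod_2)
  then have "\<forall>j<N. F (L ! j) = 0" unfolding v_def by (metis index_vec index_zero_vec(1))
  then show ?thesis using L N_def by (metis in_set_conv_nth)
qed

lemma mat_apply_mult:
  assumes hom: "\<And>i j. i < n \<Longrightarrow> j < n \<Longrightarrow> C i j = (\<Sum>k<n. A i k * B k j)"
  shows "mat_apply n C y = mat_apply n A (mat_apply n B y)"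
proof
  fix i
  show "mat_apply n C y i = mat_apply n A (mat_apply n B y) i"
  proof (cases "i < n")
    case True
    have "(\<Sum>j<n. C i j * y j) = (\<Sum>j<n. (\<Sum>k<n. A i k * B k j) * y j)"
      using True hom by simp
    also have "\<dots> = (\<Sum>k<n. A i k * (\<Sum>j<n. B k j * y j))"
      by (simp add: sum_distrib_left sum_distrib_right mult.assoc) (rule sum.swap)
    finally show ?thesis
      using True unfolding mat_apply_def by (auto intro!: sum.cong)
  qed (simp add: mat_apply_def)
qed

lemma mat_apply_linear_combination:
  "mat_apply n A (\<lambda>j. a * u j + b * v j) = (\<lambda>i. a * mat_apply n A u i + b * mat_apply n A v i)"
  by (rule ext) (simp add: mat_apply_def distrib_left sum.distrib sum_distrib_left mult.left_commute)

lemma orbit_point_vanishes_if_twice_sum: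
  fixes G (structure)
  assumes "group G" "finite (carrier G)"
    and hom: "\<And>g h i j. g \<in> carrier G \<Longrightarrow> h \<in> carrier G \<Longrightarrow> i < n \<Longrightarrow> j < n \<Longrightarrow>
      \<rho> (g \<otimes> h) i j = (\<Sum>k<n. \<rho> g i k * \<rho> h k j)"
    and g: "g\<^sub>1 \<in> carrier G" "g\<^sub>2 \<in> carrier G" "g\<^sub>3 \<in> carrier G"
    and x\<^sub>2: "mat_apply n (\<rho> g\<^sub>2) y
      = (\<lambda>j. 2 * mat_apply n (\<rho> g\<^sub>1) y j + 2 * mat_apply n (\<rho> g\<^sub>3) y j)"
  shows "mat_apply n (\<rho> g\<^sub>2) y = (\<lambda>_. 0)"
proof
  interpret group G by fact
  fix i
  have act: "mat_apply n (\<rho> (h \<otimes> g)) y = mat_apply n (\<rho> h) (mat_apply n (\<rho> g) y)"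
    if "h \<in> carrier G" "g \<in> carrier G" for h g
    by (rule mat_apply_mult) (use that hom in auto)
  define F where "F h = mat_apply n (\<rho> (h \<otimes> g\<^sub>2)) y i" for h
  define s where "s h = h \<otimes> (g\<^sub>1 \<otimes> inv g\<^sub>2)" for h
  define t where "t h = h \<otimes> (g\<^sub>3 \<otimes> inv g\<^sub>2)" for h
  have rel: "F h = 2 * F (s h) + 2 * F (t h)" if h: "h \<in> carrier G" for h
  proof -
    have "s h \<otimes> g\<^sub>2 = h \<otimes> g\<^sub>1" "t h \<otimes> g\<^sub>2 = h \<otimes> g\<^sub>3"
      using h g by (simp_all add: s_def t_def m_assoc)
    then show ?thesis
      using h g unfolding F_def
      by (simp add: act x\<^sub>2 mat_apply_linear_combination)
  qed
  have shifts: "s ` carrier G \<subseteq> carrier G" "t ` carrier G \<subseteq> carrier G"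
    using g by (auto simp: s_def t_def)
  have "\<forall>h\<in>carrier G. F h = 0"
    using \<open>finite (carrier G)\<close> shifts rel by (rule vanishes_if_twice_sum_of_two_shifts)
  then have "F \<one> = 0" by simp
  then show "mat_apply n (\<rho> g\<^sub>2) y i = 0"
    using g by (simp add: F_def)
qed

lemma three_points_not_in_single_orbit:
  fixes G (structure)
  assumes "group G" "finite (carrier G)" "orthogonal_action G n \<rho>"
    and "embed2 p\<^sub>2 = (\<lambda>j. 2 * embed2 p\<^sub>1 j + 2 * embed2 p\<^sub>3 j)" "p\<^sub>2 \<noteq> (0, 0)"
  shows "\<not> in_single_orbit G n \<rho> {p\<^sub>1, p\<^sub>2, p\<^sub>3}"
proof
  assume "in_single_orbit G n \<rho> {p\<^sub>1, p\<^sub>2, p\<^sub>3}"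
  then obtain y g\<^sub>1 g\<^sub>2 g\<^sub>3 where g: "g\<^sub>1 \<in> carrier G" "g\<^sub>2 \<in> carrier G" "g\<^sub>3 \<in> carrier G"
    and "embed2 p\<^sub>1 = mat_apply n (\<rho> g\<^sub>1) y" "embed2 p\<^sub>2 = mat_apply n (\<rho> g\<^sub>2) y"
      "embed2 p\<^sub>3 = mat_apply n (\<rho> g\<^sub>3) y"
    unfolding in_single_orbit_def by auto
  with assms have "embed2 p\<^sub>2 = (\<lambda>_. 0)"
    using orbit_point_vanishes_if_twice_sum[OF assms(1,2) _ g, of n \<rho> y]
    unfolding orthogonal_action_def by simp
  then have "embed2 p\<^sub>2 0 = 0" "embed2 p\<^sub>2 1 = 0" by simp_all
  with \<open>p\<^sub>2 \<noteq> (0, 0)\<close> show False by (simp add: embed2_def prod_eq_iff)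
qed

theorem theorem2:
  shows "\<exists>X. X \<subseteq> circle \<and> card X = 3 \<and>
    \<not> (\<exists>(G :: nat monoid) n \<rho>. group G \<and> finite (carrier G) \<and> n \<ge> 2 \<and>
          orthogonal_action G n \<rho> \<and> in_single_orbit G n \<rho> X)"
proof (intro exI conjI)
  define r :: real where "r = sqrt 15 / 4"
  have "r > 0" "r\<^sup>2 = 15 / 16"
    by (simp_all add: r_def power_divide)
  let ?X = "{(1 / 4, r), (1, 0), (1 / 4, - r)} :: (real \<times> real) set"
  show "?X \<subseteq> circle"
    using \<open>r\<^sup>2 = 15 / 16\<close> by (simp add: circle_def power_divide)
  show "card ?X = 3"
    using \<open>r > 0\<close> by simp
  have "embed2 (1, 0) = (\<lambda>j. 2 * embed2 (1 / 4, r) j + 2 * embed2 (1 / 4, - r) j)"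
    by (auto simp: embed2_def)
  then show "\<not> (\<exists>(G :: nat monoid) n \<rho>. group G \<and> finite (carrier G) \<and> n \<ge> 2 \<and>
          orthogonal_action G n \<rho> \<and> in_single_orbit G n \<rho> ?X)"
    using three_points_not_in_single_orbit[where p\<^sub>1 = "(1 / 4, r)" and p\<^sub>2 = "(1, 0)"
        and p\<^sub>3 = "(1 / 4, - r)"] by auto
qed

end
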